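(* Let $\mathfrak{g}$ be a finite-dimensional complex Lie algebra having property $F$. Then $\mathfrak{g}$ does not admit a periodic prederivation.
   Context: A Lie algebra $\mathfrak{g}$ has property $F$ if every basis of $\mathfrak{g}$ contains three distinct elements $x_1,x_2,x_3$ such that for all $i\neq j$ in $\{1,2,3\}$ one has $[x_i,[x_i,x_j]]\neq 0$ or $[x_j,[x_j,x_i]]\neq 0$. A linear map $P:\mathfrak{g}\to\mathfrak{g}$ is a prederivation if $P([x,[y,z]])=[P(x),[y,z]]+[x,[P(y),z]]+[x,[y,P(z)]]$ for all $x,y,z\in\mathfrak{g}$; it is periodic if $P^m=\mathrm{id}$ for some integer $m\ge 1$. *)

theory Defs
  imports Complex_Main
begin

definition lie_algebra :: "(complex \<Rightarrow> 'a::ab_group_add \<Rightarrow> 'a) \<Rightarrow> ('a \<Rightarrow> 'a \<Rightarrow> 'a) \<Rightarrow> bool" where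
  "lie_algebra sc br \<longleftrightarrow>
     vector_space sc \<and>
     (\<forall>x. Vector_Spaces.linear sc sc (br x)) \<and>
     (\<forall>y. Vector_Spaces.linear sc sc (\<lambda>x. br x y)) \<and>
     (\<forall>x. br x x = 0) \<and>
     (\<forall>x y z. br x (br y z) + br y (br z x) + br z (br x y) = 0)"

definition fin_dim :: "(complex \<Rightarrow> 'a::ab_group_add \<Rightarrow> 'a) \<Rightarrow> bool" where
  "fin_dim sc \<longleftrightarrow> (\<exists>B. finite B \<and> module.span sc B = UNIV)"

definition is_basis :: "(complex \<Rightarrow> 'a::ab_group_add \<Rightarrow> 'a) \<Rightarrow> 'a set \<Rightarrow> bool" where
  "is_basis sc B \<longleftrightarrow> \<not> module.dependent sc B \<and> module.span sc B = UNIV"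

definition property_F :: "(complex \<Rightarrow> 'a::ab_group_add \<Rightarrow> 'a) \<Rightarrow> ('a \<Rightarrow> 'a \<Rightarrow> 'a) \<Rightarrow> bool" where
  "property_F sc br \<longleftrightarrow>
     (\<forall>B. is_basis sc B \<longrightarrow>
        (\<exists>x1\<in>B. \<exists>x2\<in>B. \<exists>x3\<in>B. x1 \<noteq> x2 \<and> x1 \<noteq> x3 \<and> x2 \<noteq> x3 \<and>
           (\<forall>xi\<in>{x1,x2,x3}. \<forall>xj\<in>{x1,x2,x3}. xi \<noteq> xj \<longrightarrow>
              br xi (br xi xj) \<noteq> 0 \<or> br xj (br xj xi) \<noteq> 0)))"

definition prederivation :: "(complex \<Rightarrow> 'a::ab_group_add \<Rightarrow> 'a) \<Rightarrow> ('a \<Rightarrow> 'a \<Rightarrow> 'a) \<Rightarrow> ('a \<Rightarrow> 'a) \<Rightarrow> bool" where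
  "prederivation sc br P \<longleftrightarrow>
     Vector_Spaces.linear sc sc P \<and>
     (\<forall>x y z. P (br x (br y z)) = br (P x) (br y z) + br x (br (P y) z) + br x (br y (P z)))"

definition periodic :: "('a \<Rightarrow> 'a) \<Rightarrow> bool" where
  "periodic P \<longleftrightarrow> (\<exists>m::nat. m \<ge> 1 \<and> P ^^ m = id)"

end

theory Submission
  imports Defs
begin

text \<open>A periodic linear map P is diagonalisable with eigenvalues of modulus one: averaging
  the orbit of a vector against the powers of a primitive m-th root of unity splits it into
  eigenvectors. For eigenvectors x, y with eigenvalues a, b, the prederivation identity makes
  [x,[x,y]] an eigenvector for 2a + b, so if it is nonzero then |a| = |b| = |2a + b| = 1,
  which forces b = -a. Property F applied to an eigenbasis yields three eigenvalues that are
  pairwise opposite, hence zero, a contradiction.\<close>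

lemma cis_2pi_div_power_neq_1:
  fixes j m :: nat
  assumes "0 < j" "j < m"
  shows "cis (2 * pi / m) ^ j \<noteq> 1"
proof
  assume "cis (2 * pi / m) ^ j = 1"
  then have "cos (real j * (2 * pi / m)) = 1"
    by (simp add: DeMoivre complex_eq_iff)
  then obtain n :: int where "real j * (2 * pi / m) = real_of_int n * 2 * pi"
    using cos_one_2pi_int by blast
  with assms have "int j = n * int m"
    by (simp add: field_simps) (metis of_int_eq_iff of_int_mult of_int_of_nat_eq)
  then have "m dvd j"
    by (metis dvd_triv_right int_dvd_int_iff)
  with assms show False
    by (auto dest: dvd_imp_le)
qed

lemma norm_eq_1_if_power_eq_1:
  fixes z :: "'a::real_normed_div_algebra"
  assumes "z ^ m = 1" "m \<ge> 1"
  shows "norm z = 1"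
proof -
  have "norm z ^ m = 1 ^ m"
    using assms(1) by (metis norm_one norm_power power_one)
  with assms(2) show ?thesis
    using power_eq_iff_eq_base[of m "norm z" 1] by simp
qed

lemma eq_neg_if_norm_double_add_eq_1:
  fixes a b :: complex
  assumes "cmod a = 1" "cmod b = 1" "cmod (2 * a + b) = 1"
  shows "b = - a"
proof -
  obtain p q r s where ab: "a = Complex p q" "b = Complex r s"
    by (metis complex.exhaust)
  have "p\<^sup>2 + q\<^sup>2 = 1" "r\<^sup>2 + s\<^sup>2 = 1" "(2 * p + r)\<^sup>2 + (2 * q + s)\<^sup>2 = 1"
    using assms ab by (simp_all add: cmod_def)
  then have "(p + r)\<^sup>2 + (q + s)\<^sup>2 = 0"
    by (simp add: power2_eq_square algebra_simps)
  with ab show ?thesis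
    by (simp add: complex_eq_iff eq_neg_iff_add_eq_0)
qed

lemma (in vector_space) periodic_twisted_average_eigen:
  assumes lin: "Vector_Spaces.linear scale scale P" and Pm: "P ^^ m = id" and \<zeta>m: "\<zeta> ^ m = 1"
  shows "scale \<zeta> (P (\<Sum>j<m. scale (\<zeta> ^ j) ((P ^^ j) v)))
    = (\<Sum>j<m. scale (\<zeta> ^ j) ((P ^^ j) v))"
proof -
  interpret P: Vector_Spaces.linear scale scale P by (fact lin)
  show ?thesis
  proof (cases m)
    case (Suc n)
    have "scale \<zeta> (P (\<Sum>j<m. scale (\<zeta> ^ j) ((P ^^ j) v)))
        = (\<Sum>j<m. scale (\<zeta> ^ Suc j) ((P ^^ Suc j) v))"
      by (simp add: P.sum P.scale scale_sum_right)
    also have "\<dots> = (\<Sum>j<n. scale (\<zeta> ^ Suc j) ((P ^^ Suc j) v)) + v"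
      using \<zeta>m Pm by (simp only: Suc sum.lessThan_Suc) simp
    also have "\<dots> = (\<Sum>j<m. scale (\<zeta> ^ j) ((P ^^ j) v))"
      by (simp only: Suc sum.lessThan_Suc_shift) simp
    finally show ?thesis .
  qed (simp add: P.zero)
qed

lemma (in vector_space) span_eigenvectors_if_periodic:
  fixes \<zeta> :: 'a
  assumes lin: "Vector_Spaces.linear scale scale P" and Pm: "P ^^ m = id"
    and \<zeta>m: "\<zeta> ^ m = 1" and primitive: "\<And>j. 0 < j \<Longrightarrow> j < m \<Longrightarrow> \<zeta> ^ j \<noteq> 1"
    and m: "of_nat m \<noteq> (0 :: 'a)"
  shows "span {x. \<exists>c. P x = scale c x} = UNIV"
proof -
  \<comment> \<open>\<open>E k v\<close> is \<open>m\<close> times the component of \<open>v\<close> in the eigenspace of \<open>\<zeta>\<^sup>-\<^sup>k\<close>.\<close>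
  define E where "E k v = (\<Sum>j<m. scale ((\<zeta> ^ k) ^ j) ((P ^^ j) v))" for k v
  have "\<zeta> \<noteq> 0"
    using \<zeta>m m by (cases m) auto
  have roots: "(\<zeta> ^ k) ^ m = 1" for k
    using \<zeta>m by (metis power_mult power_mult_distrib power_one mult.commute)
  have eigen: "P (E k v) = scale (inverse (\<zeta> ^ k)) (E k v)" for k v
    using periodic_twisted_average_eigen[OF lin Pm roots, of k v, folded E_def] \<open>\<zeta> \<noteq> 0\<close>
    by (metis scale_scale scale_one right_inverse power_not_zero mult.commute)
  have geometric: "(\<Sum>k<m. (\<zeta> ^ j) ^ k) = (if j = 0 then of_nat m else 0)" if "j < m" for j
    using that primitive roots[of j] by (simp add: sum_gp_strict)
  have "(\<Sum>k<m. E k v) = scale (of_nat m) v" for v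
  proof -
    have "(\<Sum>k<m. E k v) = (\<Sum>j<m. scale (\<Sum>k<m. (\<zeta> ^ j) ^ k) ((P ^^ j) v))"
      unfolding E_def
      by (subst sum.swap) (simp add: scale_sum_left power_mult_distrib power_mult[symmetric] mult.commute)
    also have "\<dots> = (\<Sum>j<m. if j = 0 then scale (of_nat m) v else 0)"
      by (rule sum.cong) (simp_all add: geometric)
    also have "\<dots> = scale (of_nat m) v"
      using m by simp
    finally show ?thesis .
  qed
  then have "v \<in> span {x. \<exists>c. P x = scale c x}" for v
    using m span_sum[of "{..<m}" "\<lambda>k. E k v"] span_base eigen
    by (metis (mono_tags, lifting) mem_Collect_eq scale_scale left_inverse scale_one span_scale)
  then show ?thesis by auto
qed

lemma (in vector_space) eigenvalue_power_eq_1_if_periodic: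
  assumes lin: "Vector_Spaces.linear scale scale P" and Pm: "P ^^ m = id"
    and eigen: "P x = scale c x" and "x \<noteq> 0"
  shows "c ^ m = 1"
proof -
  interpret P: Vector_Spaces.linear scale scale P by (fact lin)
  have "(P ^^ j) x = scale (c ^ j) x" for j
    by (induction j) (simp_all add: eigen P.scale mult.commute)
  from this[of m] have "scale 1 x = scale (c ^ m) x"
    using Pm by simp
  with \<open>x \<noteq> 0\<close> show ?thesis
    by (metis scale_cancel_right)
qed

lemma norm_eigenvalue_if_periodic:
  fixes sc :: "complex \<Rightarrow> 'a::ab_group_add \<Rightarrow> 'a"
  assumes "vector_space sc" "Vector_Spaces.linear sc sc P" "periodic P"
    and "P x = sc c x" "x \<noteq> 0"
  shows "cmod c = 1"
proof -
  obtain m where "m \<ge> 1" "P ^^ m = id"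
    using assms(3) unfolding periodic_def by blast
  with assms show ?thesis
    by (metis norm_eq_1_if_power_eq_1 vector_space.eigenvalue_power_eq_1_if_periodic)
qed

lemma periodic_linear_has_eigenbasis:
  fixes sc :: "complex \<Rightarrow> 'a::ab_group_add \<Rightarrow> 'a"
  assumes "vector_space sc" and lin: "Vector_Spaces.linear sc sc P" and "periodic P"
  obtains B where "is_basis sc B" "\<And>x. x \<in> B \<Longrightarrow> \<exists>c. P x = sc c x"
proof -
  interpret vector_space sc by fact
  let ?V = "{x. \<exists>c. P x = sc c x}"
  obtain m where m: "m \<ge> 1" "P ^^ m = id"
    using \<open>periodic P\<close> unfolding periodic_def by blast
  have "span ?V = UNIV"
  proof (rule span_eigenvectors_if_periodic[OF lin m(2)])
    show "cis (2 * pi / m) ^ m = 1"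
      using m(1) by (simp add: DeMoivre)
  qed (use m(1) cis_2pi_div_power_neq_1 in auto)
  obtain B where B: "B \<subseteq> ?V" "independent B" "?V \<subseteq> span B"
    by (rule maximal_independent_subset)
  then have "span B = UNIV"
    using \<open>span ?V = UNIV\<close> span_minimal[OF B(3) subspace_span] by blast
  with B that show ?thesis
    unfolding is_basis_def by blast
qed

lemma lie_algebra_bracket_scale:
  assumes "lie_algebra sc br"
  shows "br (sc c x) y = sc c (br x y)" and "br x (sc c y) = sc c (br x y)"
proof -
  have "module_hom sc sc (\<lambda>x. br x y)" "module_hom sc sc (br x)"
    using assms unfolding lie_algebra_def linear_iff_module_hom by blast+
  from module_hom.scale[OF this(1)] module_hom.scale[OF this(2)]
  show "br (sc c x) y = sc c (br x y)" and "br x (sc c y) = sc c (br x y)"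
    by simp_all
qed

lemma prederivation_double_bracket_eigen:
  assumes "lie_algebra sc br" "prederivation sc br P"
    and "P x = sc a x" "P y = sc b y"
  shows "P (br x (br x y)) = sc (2 * a + b) (br x (br x y))"
proof -
  interpret vector_space sc
    using assms(1) unfolding lie_algebra_def by blast
  have "P (br x (br x y)) = br (P x) (br x y) + br x (br (P x) y) + br x (br x (P y))"
    using assms(2) unfolding prederivation_def by blast
  also have "\<dots> = sc a (br x (br x y)) + sc a (br x (br x y)) + sc b (br x (br x y))"
    by (simp only: assms(3,4) lie_algebra_bracket_scale[OF assms(1)])
  also have "\<dots> = sc (2 * a + b) (br x (br x y))"
    by (simp only: mult_2 scale_left_distrib)
  finally show ?thesis .
qed

lemma eigenvalues_opposite_if_double_bracket_ne_0:
  fixes sc :: "complex \<Rightarrow> 'a::ab_group_add \<Rightarrow> 'a"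
  assumes lie: "lie_algebra sc br" and pre: "prederivation sc br P" and "periodic P"
    and "P x = sc a x" "P y = sc b y" "x \<noteq> 0" "y \<noteq> 0"
    and "br x (br x y) \<noteq> 0 \<or> br y (br y x) \<noteq> 0"
  shows "a + b = 0"
proof -
  have vs: "vector_space sc" and lin: "Vector_Spaces.linear sc sc P"
    using lie pre unfolding lie_algebra_def prederivation_def by blast+
  have opposite: "a + b = 0"
    if "P x = sc a x" "P y = sc b y" "x \<noteq> 0" "y \<noteq> 0" "br x (br x y) \<noteq> 0" for x y a b
  proof -
    have "P (br x (br x y)) = sc (2 * a + b) (br x (br x y))"
      using prederivation_double_bracket_eigen[OF lie pre that(1,2)] .
    then have "cmod (2 * a + b) = 1"
      using norm_eigenvalue_if_periodic[OF vs lin \<open>periodic P\<close>] that(5) by blast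
    moreover have "cmod a = 1" "cmod b = 1"
      using norm_eigenvalue_if_periodic[OF vs lin \<open>periodic P\<close>] that(1-4) by blast+
    ultimately show ?thesis
      using eq_neg_if_norm_double_add_eq_1[of a b] by simp
  qed
  from assms(8) show ?thesis
  proof
    assume "br x (br x y) \<noteq> 0"
    then show ?thesis
      by (rule opposite[OF assms(4-7)])
  next
    assume "br y (br y x) \<noteq> 0"
    then have "b + a = 0"
      by (rule opposite[OF assms(5,4,7,6)])
    then show ?thesis
      by (simp only: add.commute)
  qed
qed

lemma zero_notin_basis:
  assumes "vector_space sc" "is_basis sc B"
  shows "0 \<notin> B"
  using assms module.dependent_zero[of sc B] unfolding is_basis_def module_iff_vector_space by blast

theorem proposition5p19:
  fixes sc :: "complex \<Rightarrow> 'a::ab_group_add \<Rightarrow> 'a" and br :: "'a \<Rightarrow> 'a \<Rightarrow> 'a"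
  assumes "lie_algebra sc br" and "fin_dim sc" and "property_F sc br"
  shows "\<not> (\<exists>P. prederivation sc br P \<and> periodic P)"
proof
  assume "\<exists>P. prederivation sc br P \<and> periodic P"
  then obtain P where pre: "prederivation sc br P" and per: "periodic P"
    by blast
  have vs: "vector_space sc" and lin: "Vector_Spaces.linear sc sc P"
    using assms(1) pre unfolding lie_algebra_def prederivation_def by blast+
  obtain B where B: "is_basis sc B" and eigen: "\<And>x. x \<in> B \<Longrightarrow> \<exists>c. P x = sc c x"
    using periodic_linear_has_eigenbasis[OF vs lin per] by blast
  obtain x1 x2 x3 where x: "x1 \<in> B" "x2 \<in> B" "x3 \<in> B" "x1 \<noteq> x2" "x1 \<noteq> x3" "x2 \<noteq> x3"
    and F: "\<And>xi xj. xi \<in> {x1, x2, x3} \<Longrightarrow> xj \<in> {x1, x2, x3} \<Longrightarrow> xi \<noteq> xj \<Longrightarrow>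
              br xi (br xi xj) \<noteq> 0 \<or> br xj (br xj xi) \<noteq> 0"
    using assms(3) B unfolding property_F_def by meson
  obtain c1 c2 c3 where c: "P x1 = sc c1 x1" "P x2 = sc c2 x2" "P x3 = sc c3 x3"
    using eigen x by meson
  have nonzero: "x1 \<noteq> 0" "x2 \<noteq> 0" "x3 \<noteq> 0"
    using zero_notin_basis[OF vs B] x by auto
  have "c1 + c2 = 0" "c1 + c3 = 0" "c2 + c3 = 0"
    using eigenvalues_opposite_if_double_bracket_ne_0[OF assms(1) pre per] c nonzero F x
    by simp_all
  then have "c1 = 0"
    by (simp add: add_eq_0_iff)
  moreover have "cmod c1 = 1"
    using norm_eigenvalue_if_periodic[OF vs lin per c(1) nonzero(1)] .
  ultimately show False
    by simp
qed

end
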